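(* Assume $\operatorname{char}k=0$ or $\operatorname{char}k>N$, and let $V$ have homogeneous basis $x_1,\dots,x_d$. There is a homomorphism of superbialgebras $\varphi\colon\underline{\operatorname{end}}\,\mathsf S_N(V)\to\mathcal O(\mathsf E(V))$ with $\varphi(z^i_j)=x^i_j$ for all $i,j$; restricting the coaction of $\underline{\operatorname{end}}\,\mathsf S_N(V)$ on $V$ along $\varphi$ gives the coaction $x_j\mapsto\sum_ix_i\otimes x^i_j$.
   Context: $\mathsf S_N(V)=\mathsf T(V)/(c_{Y_N}(V^{\otimes N}))$ with $Y_N=\frac1{N!}\sum\operatorname{sgn}(\sigma)\sigma$ acting by the signed permutation action $c_\sigma(v_1\otimes\cdots\otimes v_N)=(-1)^{\sum_{(i,j)\in\mathrm{inv}(\sigma)}\hat v_i\hat v_j}v_{\sigma^{-1}(1)}\otimes\cdots\otimes v_{\sigma^{-1}(N)}$. For $\mathcal A=A(V,R)=\mathsf T(V)/(R)$, $\underline{\operatorname{end}}\,\mathcal A$ is the superbialgebra generated by $z^i_j=x^i\otimes x_j$ (parity $\hat i+\hat j$) with relations $c_{\pi_N}(R^\perp\otimes R)\subseteq(V^*\otimes V)^{\otimes N}$, $\Delta(z^i_j)=\sum_kz^i_k\otimes z^k_j$, $\varepsilon(z^i_j)=\delta^i_j$, coacting on $\mathcal A$ by $x_j\mapsto\sum_ix_i\otimes z^i_j$; here $R^\perp$ is the annihilator for $\langle f_1\otimes\cdots\otimes f_N,v_N\otimes\cdots\otimes v_1\rangle=\prod\langle f_i,v_i\rangle$ and $c_{\pi_N}(f_1\otimes\cdots\otimes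 f_N\otimes v_1\otimes\cdots\otimes v_N)=(-1)^{\sum_i\sum_{j>i}\hat v_i\hat f_j}(f_1\otimes v_1)\otimes\cdots\otimes(f_N\otimes v_N)$. $\mathcal O(\mathsf E(V))=k[x^i_j]$ is the free supercommutative superbialgebra on $x^i_j$ of parity $\hat i+\hat j$ with $\Delta(x^i_j)=\sum_kx^i_k\otimes x^k_j$, $\varepsilon(x^i_j)=\delta^i_j$. *)

theory Defs
  imports Main "HOL-Combinatorics.Permutations"
begin

text \<open>An element of the free associative k-algebra on a generator type 'g is a
finitely supported function from words ('g list) to k; the word [g1,...,gn]
stands for the monomial g1 g2 ... gn.\<close>

type_synonym ('g,'k) fa = "'g list \<Rightarrow> 'k"

definition fin :: "('g,'k::zero) fa \<Rightarrow> bool" where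
  "fin a \<longleftrightarrow> finite {w. a w \<noteq> 0}"

definition fa_mul :: "('g,'k::semiring_0) fa \<Rightarrow> ('g,'k) fa \<Rightarrow> ('g,'k) fa" where
  "fa_mul a b = (\<lambda>w. \<Sum>i\<le>length w. a (take i w) * b (drop i w))"

definition fa_one :: "('g,'k::{zero,one}) fa" where
  "fa_one = (\<lambda>w. if w = [] then 1 else 0)"

definition mono :: "'g list \<Rightarrow> ('g,'k::{zero,one}) fa" where
  "mono u = (\<lambda>w. if w = u then 1 else 0)"

definition gen :: "'g \<Rightarrow> ('g,'k::{zero,one}) fa" where
  "gen g = mono [g]"

definition fa_smult :: "'k \<Rightarrow> ('g,'k::times) fa \<Rightarrow> ('g,'k) fa" where
  "fa_smult c a = (\<lambda>w. c * a w)"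

inductive_set gen_ideal :: "('g,'k::comm_ring_1) fa set \<Rightarrow> ('g,'k) fa set"
  for S where
  zero: "(\<lambda>w. 0) \<in> gen_ideal S"
| base: "s \<in> S \<Longrightarrow> s \<in> gen_ideal S"
| add: "x \<in> gen_ideal S \<Longrightarrow> y \<in> gen_ideal S \<Longrightarrow> (\<lambda>w. x w + y w) \<in> gen_ideal S"
| smult: "x \<in> gen_ideal S \<Longrightarrow> fa_smult c x \<in> gen_ideal S"
| lmul: "x \<in> gen_ideal S \<Longrightarrow> fin a \<Longrightarrow> fa_mul a x \<in> gen_ideal S"
| rmul: "x \<in> gen_ideal S \<Longrightarrow> fin a \<Longrightarrow> fa_mul x a \<in> gen_ideal S"

inductive_set lin_span :: "('a \<Rightarrow> 'k::comm_ring_1) set \<Rightarrow> ('a \<Rightarrow> 'k) set"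
  for S where
  zero: "(\<lambda>w. 0) \<in> lin_span S"
| base: "s \<in> S \<Longrightarrow> s \<in> lin_span S"
| add: "x \<in> lin_span S \<Longrightarrow> y \<in> lin_span S \<Longrightarrow> (\<lambda>w. x w + y w) \<in> lin_span S"
| smult: "x \<in> lin_span S \<Longrightarrow> (\<lambda>w. c * x w) \<in> lin_span S"

text \<open>Congruence modulo an ideal (equality in the quotient).\<close>

definition congr :: "('a \<Rightarrow> 'k::ab_group_add) set \<Rightarrow> ('a \<Rightarrow> 'k) \<Rightarrow> ('a \<Rightarrow> 'k) \<Rightarrow> bool" where
  "congr J a b \<longleftrightarrow> (\<lambda>w. a w - b w) \<in> J"

definition psign :: "nat \<Rightarrow> 'k::comm_ring_1" where
  "psign n = (-1) ^ n"

section \<open>The super vector space V and the algebra S_N(V)\<close>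

text \<open>V has homogeneous basis x_0,...,x_(d-1); par i = True iff x_i is odd.
Basis tensors of V^{\<otimes>N} are words of length N over {..<d}.\<close>

definition words :: "nat \<Rightarrow> nat \<Rightarrow> nat list set" where
  "words d N = {u. length u = N \<and> set u \<subseteq> {..<d}}"

text \<open>Signed permutation action c_sigma on a basis tensor u (positions 0..N-1):
c_sigma(v_0 \<otimes> ... \<otimes> v_(N-1)) = (sign) v_(sigma^-1 0) \<otimes> ... \<otimes> v_(sigma^-1 (N-1)),
sign = (-1)^(sum over inversions (i,j) of sigma of par(u_i) par(u_j)).\<close>

definition inv_sign :: "(nat \<Rightarrow> bool) \<Rightarrow> nat \<Rightarrow> (nat \<Rightarrow> nat) \<Rightarrow> nat list \<Rightarrow> nat" where
  "inv_sign par N \<sigma> u =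
     card {(i,j). i < j \<and> j < N \<and> \<sigma> j < \<sigma> i \<and> par (u ! i) \<and> par (u ! j)}"

definition cperm :: "(nat \<Rightarrow> bool) \<Rightarrow> nat \<Rightarrow> (nat \<Rightarrow> nat) \<Rightarrow> nat list \<Rightarrow> (nat,'k::comm_ring_1) fa" where
  "cperm par N \<sigma> u =
     fa_smult (psign (inv_sign par N \<sigma> u)) (mono (map (\<lambda>m. u ! inv \<sigma> m) [0..<N]))"

text \<open>c_{Y_N}(u) with Y_N = (1/N!) sum sgn(sigma) sigma.\<close>

definition cY :: "(nat \<Rightarrow> bool) \<Rightarrow> nat \<Rightarrow> nat list \<Rightarrow> (nat,'k::field) fa" where
  "cY par N u = (\<lambda>w. (\<Sum>\<sigma>\<in>{\<sigma>. \<sigma> permutes {..<N}}.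
                        of_int (sign \<sigma>) * cperm par N \<sigma> u w) / of_nat (fact N))"

text \<open>R = c_{Y_N}(V^{\<otimes>N}) \<subseteq> V^{\<otimes>N}; S_N(V) = T(V)/(R).\<close>

definition Rsp :: "(nat \<Rightarrow> bool) \<Rightarrow> nat \<Rightarrow> nat \<Rightarrow> (nat,'k::field) fa set" where
  "Rsp par d N = lin_span {cY par N u | u. u \<in> words d N}"

text \<open>R^perp \<subseteq> (V^*)^{\<otimes>N} for the pairing
<x^(w_0) \<otimes> ... \<otimes> x^(w_(N-1)), x_(u_(N-1)) \<otimes> ... \<otimes> x_(u_0)> = prod delta(w_i,u_i),
i.e. <f, r> = sum_u f(rev u) r(u).\<close>

definition Rperp :: "(nat \<Rightarrow> bool) \<Rightarrow> nat \<Rightarrow> nat \<Rightarrow> (nat,'k::field) fa set" where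
  "Rperp par d N = {f. (\<forall>w. w \<notin> words d N \<longrightarrow> f w = 0) \<and>
      (\<forall>r\<in>Rsp par d N. (\<Sum>u\<in>words d N. f (rev u) * r u) = 0)}"

section \<open>end S_N(V) and O(E(V)) as quotients of the free algebra on z^i_j\<close>

text \<open>Generators (i,j) with i,j < d stand for z^i_j (resp. x^i_j); parity par i xor par j.\<close>

definition gpar :: "(nat \<Rightarrow> bool) \<Rightarrow> nat \<times> nat \<Rightarrow> bool" where
  "gpar par g = (par (fst g) \<noteq> par (snd g))"

definition wpar :: "(nat \<Rightarrow> bool) \<Rightarrow> (nat \<times> nat) list \<Rightarrow> bool" where
  "wpar par w = odd (length (filter (gpar par) w))"

text \<open>c_{pi_N}(f \<otimes> r), extended bilinearly from basis tensors:
(x^(w_0) \<otimes>..\<otimes> x^(w_(N-1))) \<otimes> (x_(u_0) \<otimes>..\<otimes> x_(u_(N-1))) \<mapsto>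
(-1)^(sum_{i<j} par(u_i) par(w_j)) z^(w_0)_(u_0) ... z^(w_(N-1))_(u_(N-1)).\<close>

definition pi_sign :: "(nat \<Rightarrow> bool) \<Rightarrow> nat \<Rightarrow> nat list \<Rightarrow> nat list \<Rightarrow> nat" where
  "pi_sign par N w u = card {(i,j). i < j \<and> j < N \<and> par (u ! i) \<and> par (w ! j)}"

definition cpi :: "(nat \<Rightarrow> bool) \<Rightarrow> nat \<Rightarrow> nat \<Rightarrow> (nat,'k::field) fa \<Rightarrow> (nat,'k) fa
    \<Rightarrow> (nat \<times> nat,'k) fa" where
  "cpi par d N f r = (\<lambda>t. \<Sum>w\<in>words d N. \<Sum>u\<in>words d N.
       if t = zip w u then f w * r u * psign (pi_sign par N w u) else 0)"

definition end_ideal :: "(nat \<Rightarrow> bool) \<Rightarrow> nat \<Rightarrow> nat \<Rightarrow> (nat \<times> nat,'k::field) fa set" where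
  "end_ideal par d N = gen_ideal {cpi par d N f r | f r. f \<in> Rperp par d N \<and> r \<in> Rsp par d N}"

definition Zalg :: "nat \<Rightarrow> (nat \<times> nat,'k::zero) fa set" where
  "Zalg d = {a. fin a \<and> (\<forall>w. a w \<noteq> 0 \<longrightarrow> set w \<subseteq> {..<d} \<times> {..<d})}"

text \<open>O(E(V)): free supercommutative algebra on x^i_j, i.e. free algebra modulo
the ideal generated by supercommutators and squares of odd generators.\<close>

definition supercomm_ideal :: "(nat \<Rightarrow> bool) \<Rightarrow> nat \<Rightarrow> (nat \<times> nat,'k::field) fa set" where
  "supercomm_ideal par d = gen_ideal
     ({(\<lambda>w. fa_mul (gen a) (gen b) w
            - (if gpar par a \<and> gpar par b then -1 else 1) * fa_mul (gen b) (gen a) w)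
        | a b. a \<in> {..<d} \<times> {..<d} \<and> b \<in> {..<d} \<times> {..<d}}
      \<union> {fa_mul (gen a) (gen a) | a. a \<in> {..<d} \<times> {..<d} \<and> gpar par a})"

definition supp :: "('a \<Rightarrow> 'k::zero) \<Rightarrow> 'a set" where
  "supp a = {w. a w \<noteq> 0}"

text \<open>epsilon(z^i_j) = delta_ij, extended multiplicatively and linearly.\<close>

definition eps :: "(nat \<times> nat,'k::comm_ring_1) fa \<Rightarrow> 'k" where
  "eps a = (\<Sum>w\<in>supp a. a w * (\<Prod>g\<leftarrow>w. if fst g = snd g then 1 else 0))"

text \<open>Elements of A \<otimes> A for free algebras A: finitely supported functions on pairs
of words. Super tensor product multiplication (a\<otimes>b)(c\<otimes>d) = (-1)^(|b||c|) ac \<otimes> bd.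
Delta(z^i_j) = sum_k z^i_k \<otimes> z^k_j, extended to an algebra map into the super
tensor square; on a monomial z^(i_1)_(j_1) ... z^(i_n)_(j_n) this gives
sum over k_1..k_n of (-1)^(sum_{a<b} |z^(k_a)_(j_a)| |z^(i_b)_(k_b)|)
(z^(i_1)_(k_1)...z^(i_n)_(k_n)) \<otimes> (z^(k_1)_(j_1)...z^(k_n)_(j_n)).\<close>

definition delta_sign :: "(nat \<Rightarrow> bool) \<Rightarrow> (nat \<times> nat) list \<Rightarrow> nat list \<Rightarrow> nat" where
  "delta_sign par w ks = card {(a,b). a < b \<and> b < length w \<and>
      gpar par (ks ! a, snd (w ! a)) \<and> gpar par (fst (w ! b), ks ! b)}"

definition delta_mono :: "(nat \<Rightarrow> bool) \<Rightarrow> nat \<Rightarrow> (nat \<times> nat) list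
    \<Rightarrow> ((nat \<times> nat) list \<times> (nat \<times> nat) list \<Rightarrow> 'k::comm_ring_1)" where
  "delta_mono par d w = (\<lambda>p. \<Sum>ks\<in>words d (length w).
      if p = (zip (map fst w) ks, zip ks (map snd w))
      then psign (delta_sign par w ks) else 0)"

definition Delta :: "(nat \<Rightarrow> bool) \<Rightarrow> nat \<Rightarrow> (nat \<times> nat,'k::comm_ring_1) fa
    \<Rightarrow> ((nat \<times> nat) list \<times> (nat \<times> nat) list \<Rightarrow> 'k)" where
  "Delta par d a = (\<lambda>p. \<Sum>w\<in>supp a. a w * delta_mono par d w p)"

text \<open>phi \<otimes> phi applied to an element of the tensor square (phi given on representatives).\<close>

definition tens_map :: "(('g,'k) fa \<Rightarrow> ('g,'k) fa)
    \<Rightarrow> ('g list \<times> 'g list \<Rightarrow> 'k::comm_ring_1) \<Rightarrow> ('g list \<times> 'g list \<Rightarrow> 'k)" where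
  "tens_map \<phi> T = (\<lambda>(w1,w2). \<Sum>p\<in>supp T. T p * \<phi> (mono (fst p)) w1 * \<phi> (mono (snd p)) w2)"

definition tens :: "('g,'k::comm_ring_1) fa \<Rightarrow> ('g,'k) fa \<Rightarrow> ('g list \<times> 'g list \<Rightarrow> 'k)" where
  "tens a b = (\<lambda>(w1,w2). a w1 * b w2)"

text \<open>Kernel of (A/J) \<otimes> (A/J) <- A \<otimes> A:  J \<otimes> A + A \<otimes> J.\<close>

definition tens_ideal :: "('g,'k::comm_ring_1) fa set \<Rightarrow> ('g list \<times> 'g list \<Rightarrow> 'k) set" where
  "tens_ideal J = lin_span ({tens a b | a b. a \<in> J \<and> fin b} \<union> {tens a b | a b. fin a \<and> b \<in> J})"

definition homog :: "(nat \<Rightarrow> bool) \<Rightarrow> bool \<Rightarrow> (nat \<times> nat,'k::zero) fa \<Rightarrow> bool" where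
  "homog par p a \<longleftrightarrow> (\<forall>w. a w \<noteq> 0 \<longrightarrow> wpar par w = p)"

text \<open>phi is given on representatives in the free algebra on z^i_j; it induces a
map end S_N(V) = Zalg/I -> O(E(V)) = Zalg/J which is a homomorphism of
superbialgebras.\<close>

definition is_superbialg_hom :: "(nat \<Rightarrow> bool) \<Rightarrow> nat \<Rightarrow> nat
    \<Rightarrow> ((nat \<times> nat,'k::field) fa \<Rightarrow> (nat \<times> nat,'k) fa) \<Rightarrow> bool" where
  "is_superbialg_hom par d N \<phi> \<longleftrightarrow>
     (let I = end_ideal par d N; J = supercomm_ideal par d in
      (\<forall>a\<in>Zalg d. \<phi> a \<in> Zalg d) \<and>
      (\<forall>a\<in>Zalg d. \<forall>b\<in>Zalg d. congr I a b \<longrightarrow> congr J (\<phi> a) (\<phi> b)) \<and>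
      (\<forall>a\<in>Zalg d. \<forall>b\<in>Zalg d. congr J (\<phi> (\<lambda>w. a w + b w)) (\<lambda>w. \<phi> a w + \<phi> b w)) \<and>
      (\<forall>a\<in>Zalg d. \<forall>c. congr J (\<phi> (fa_smult c a)) (fa_smult c (\<phi> a))) \<and>
      (\<forall>a\<in>Zalg d. \<forall>b\<in>Zalg d. congr J (\<phi> (fa_mul a b)) (fa_mul (\<phi> a) (\<phi> b))) \<and>
      congr J (\<phi> fa_one) fa_one \<and>
      (\<forall>a\<in>Zalg d. \<forall>p. homog par p a \<longrightarrow> (\<exists>b\<in>Zalg d. homog par p b \<and> congr J (\<phi> a) b)) \<and>
      (\<forall>a\<in>Zalg d. eps (\<phi> a) = eps a) \<and>
      (\<forall>a\<in>Zalg d. congr (tens_ideal J) (Delta par d (\<phi> a)) (tens_map \<phi> (Delta par d a))))"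

text \<open>Coaction of the free algebra on V: x_j \<mapsto> sum_i x_i \<otimes> z^i_j, as the
coefficient function i \<mapsto> z^i_j.\<close>

definition coact :: "nat \<Rightarrow> nat \<Rightarrow> nat \<Rightarrow> (nat \<times> nat,'k::{zero,one}) fa" where
  "coact d j = (\<lambda>i. if i < d then gen (i,j) else (\<lambda>w. 0))"

end

theory Submission
  imports Defs "HOL-Library.Product_Lexorder"
begin

(* The homomorphism phi is induced by the identity of the free algebra on the
   generators z^i_j = x^i_j.  Counit, coproduct and coaction are given by the
   same formulas on both sides, so the whole content of the theorem is the
   inclusion  end_ideal par d N <= supercomm_ideal par d : every defining
   relation c_pi(f (x) r), f in R^perp, r in R, of end S_N(V) already holds in
   the supercommutative algebra O(E(V)).  By linearity in r it suffices to take
   r = c_Y(x_u) for a basis tensor u. *)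

lemma fa_mul_mono_left:
  fixes x :: "('g,'k::semiring_1) fa"
  shows "fa_mul (mono u) x w =
           (if length u \<le> length w \<and> take (length u) w = u then x (drop (length u) w) else 0)"
proof -
  have "fa_mul (mono u) x w =
          (\<Sum>i\<le>length w. if i = length u \<and> take (length u) w = u then x (drop i w) else 0)"
    unfolding fa_mul_def mono_def by (rule sum.cong) auto
  then show ?thesis by (auto simp: sum.delta' if_distrib cong: if_cong)
qed

lemma fa_mul_mono_mono: "fa_mul (mono u) (mono v) = (mono (u @ v) :: ('g,'k::semiring_1) fa)"
proof
  fix w :: "'g list"
  have "(w = u @ v) \<longleftrightarrow> (length u \<le> length w \<and> take (length u) w = u \<and> drop (length u) w = v)"
    by (metis append_eq_conv_conj append_take_drop_id le_add1 length_append)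
  then show "fa_mul (mono u) (mono v) w = (mono (u @ v) :: ('g,'k) fa) w"
    unfolding fa_mul_mono_left by (simp add: mono_def)
qed

lemma fin_mono: "fin (mono u :: ('g,'k::zero_neq_one) fa)"
  unfolding fin_def mono_def by (rule finite_subset[of _ "{u}"]) auto

lemma fa_smult_one [simp]:
  fixes a :: "('g,'k::comm_ring_1) fa"
  shows "fa_smult 1 a = a"
  by (simp add: fa_smult_def)

lemma fa_smult_smult:
  fixes a :: "('g,'k::comm_ring_1) fa"
  shows "fa_smult c (fa_smult c' a) = fa_smult (c * c') a"
  by (simp add: fa_smult_def mult.assoc)

lemma fa_mul_smult_right:
  fixes a :: "('g,'k::comm_ring_1) fa"
  shows "fa_mul m (fa_smult c a) = fa_smult c (fa_mul m a)"
  unfolding fa_mul_def fa_smult_def by (rule ext) (simp add: sum_distrib_left algebra_simps)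

lemma fa_mul_smult_left:
  fixes a :: "('g,'k::comm_ring_1) fa"
  shows "fa_mul (fa_smult c a) m = fa_smult c (fa_mul a m)"
  unfolding fa_mul_def fa_smult_def by (rule ext) (simp add: sum_distrib_left algebra_simps)

lemma fa_mul_diff_right:
  fixes a :: "('g,'k::comm_ring_1) fa"
  shows "fa_mul m (\<lambda>w. a w - b w) = (\<lambda>w. fa_mul m a w - fa_mul m b w)"
  unfolding fa_mul_def by (rule ext) (simp add: right_diff_distrib sum_subtractf)

lemma fa_mul_diff_left:
  fixes a :: "('g,'k::comm_ring_1) fa"
  shows "fa_mul (\<lambda>w. a w - b w) m = (\<lambda>w. fa_mul a m w - fa_mul b m w)"
  unfolding fa_mul_def by (rule ext) (simp add: left_diff_distrib sum_subtractf)

lemma psign_add: "psign (a + b) = (psign a * psign b :: 'k::comm_ring_1)"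
  by (simp add: psign_def power_add)

lemma psign_sq: "psign a * psign a = (1 :: 'k::comm_ring_1)"
  by (simp add: psign_def power_add[symmetric])

lemma psign_even:
  assumes "even (a + b)" shows "psign a = (psign b :: 'k::comm_ring_1)"
proof -
  have "psign a * psign b = (psign (a + b) :: 'k)" by (simp add: psign_add)
  also have "\<dots> = 1" using assms by (simp add: psign_def)
  finally show ?thesis by (metis mult.assoc mult_1_left psign_sq)
qed

lemma ideal_diff:
  assumes "x \<in> gen_ideal S" "y \<in> gen_ideal S"
  shows "(\<lambda>w. x w - y w) \<in> gen_ideal S"
proof -
  have "(\<lambda>w. x w + fa_smult (-1) y w) \<in> gen_ideal S"
    using assms by (intro gen_ideal.add gen_ideal.smult)
  then show ?thesis by (simp add: fa_smult_def)
qed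

lemma congr_refl: "congr (gen_ideal S) a a"
  unfolding congr_def using gen_ideal.zero by simp

lemma congr_sym: "congr (gen_ideal S) a b \<Longrightarrow> congr (gen_ideal S) b a"
  unfolding congr_def using ideal_diff[OF gen_ideal.zero] by fastforce

lemma congr_add:
  assumes "congr (gen_ideal S) a b" "congr (gen_ideal S) c e"
  shows "congr (gen_ideal S) (\<lambda>w. a w + c w) (\<lambda>w. b w + e w)"
  using gen_ideal.add[OF assms[unfolded congr_def]] unfolding congr_def
  by (simp add: algebra_simps)

lemma congr_trans:
  assumes "congr (gen_ideal S) a b" "congr (gen_ideal S) b c"
  shows "congr (gen_ideal S) a c"
  using gen_ideal.add[OF assms[unfolded congr_def]] unfolding congr_def by simp

lemma congr_smult:
  assumes "congr (gen_ideal S) a b"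
  shows "congr (gen_ideal S) (fa_smult c a) (fa_smult c b)"
proof -
  have "fa_smult c (\<lambda>w. a w - b w) \<in> gen_ideal S"
    using assms unfolding congr_def by (rule gen_ideal.smult)
  then show ?thesis unfolding congr_def by (simp add: fa_smult_def right_diff_distrib)
qed

lemma congr_lmul: "fin m \<Longrightarrow> congr (gen_ideal S) a b \<Longrightarrow> congr (gen_ideal S) (fa_mul m a) (fa_mul m b)"
  unfolding congr_def using gen_ideal.lmul[of "\<lambda>w. a w - b w" S m] by (simp add: fa_mul_diff_right)

lemma congr_sum:
  assumes "finite A" "\<And>x. x \<in> A \<Longrightarrow> congr (gen_ideal S) (F x) (G x)"
  shows "congr (gen_ideal S) (\<lambda>w. \<Sum>x\<in>A. F x w) (\<lambda>w. \<Sum>x\<in>A. G x w)"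
  using assms by (induction A rule: finite_induct) (auto simp: congr_refl intro: congr_add)

lemma congr_ideal_members: "a \<in> gen_ideal S \<Longrightarrow> b \<in> gen_ideal S \<Longrightarrow> congr (gen_ideal S) a b"
  unfolding congr_def by (rule ideal_diff)

lemma congr_zero_iff: "congr J a (\<lambda>w. 0) \<longleftrightarrow> a \<in> J"
  unfolding congr_def by simp

lemma gen_ideal_mono:
  assumes "S \<subseteq> gen_ideal T" shows "gen_ideal S \<subseteq> gen_ideal T"
proof
  fix x assume "x \<in> gen_ideal S"
  then show "x \<in> gen_ideal T"
    by induction (use assms in \<open>auto intro: gen_ideal.intros\<close>)
qed

definition supercomm_rels :: "(nat \<Rightarrow> bool) \<Rightarrow> nat \<Rightarrow> (nat \<times> nat,'k::field) fa set" where
  "supercomm_rels par d =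
     {(\<lambda>w. fa_mul (gen a) (gen b) w
            - (if gpar par a \<and> gpar par b then -1 else 1) * fa_mul (gen b) (gen a) w)
        | a b. a \<in> {..<d} \<times> {..<d} \<and> b \<in> {..<d} \<times> {..<d}}
      \<union> {fa_mul (gen a) (gen a) | a. a \<in> {..<d} \<times> {..<d} \<and> gpar par a}"

lemma supercomm_ideal_eq: "supercomm_ideal par d = gen_ideal (supercomm_rels par d)"
  by (simp add: supercomm_ideal_def supercomm_rels_def)

lemmas supercomm_refl = congr_refl[where S = "supercomm_rels par d" for par d, folded supercomm_ideal_eq]
lemmas supercomm_sym = congr_sym[where S = "supercomm_rels par d" for par d, folded supercomm_ideal_eq]
lemmas supercomm_trans = congr_trans[where S = "supercomm_rels par d" for par d, folded supercomm_ideal_eq]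
lemmas supercomm_smult = congr_smult[where S = "supercomm_rels par d" for par d, folded supercomm_ideal_eq]
lemmas supercomm_lmul = congr_lmul[where S = "supercomm_rels par d" for par d, folded supercomm_ideal_eq]
lemmas supercomm_sum = congr_sum[where S = "supercomm_rels par d" for par d, folded supercomm_ideal_eq]
lemmas supercomm_members =
  congr_ideal_members[where S = "supercomm_rels par d" for par d, folded supercomm_ideal_eq]

text \<open>\<open>perm_word N \<sigma> t\<close> moves the letter at position \<open>i\<close> of \<open>t\<close> to position
  \<open>\<sigma> i\<close>; this is the reordering performed by \<open>c_\<sigma>\<close> on basis tensors.\<close>

definition perm_word :: "nat \<Rightarrow> (nat \<Rightarrow> nat) \<Rightarrow> 'a list \<Rightarrow> 'a list" where
  "perm_word N \<sigma> t = map (\<lambda>m. t ! inv \<sigma> m) [0..<N]"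

abbreviation perms :: "nat \<Rightarrow> (nat \<Rightarrow> nat) set" where
  "perms N \<equiv> {\<sigma>. \<sigma> permutes {..<N}}"

lemma finite_perms: "finite (perms N)"
  by (rule finite_permutations) simp

lemma perm_word_nth: "k < N \<Longrightarrow> perm_word N \<sigma> t ! k = t ! inv \<sigma> k"
  by (simp add: perm_word_def)

lemma length_perm_word [simp]: "length (perm_word N \<sigma> t) = N"
  by (simp add: perm_word_def)

lemma perm_word_permute_list: "length t = N \<Longrightarrow> perm_word N \<sigma> t = permute_list (inv \<sigma>) t"
  by (simp add: perm_word_def permute_list_def)

lemma mset_perm_word:
  "\<sigma> permutes {..<N} \<Longrightarrow> length t = N \<Longrightarrow> mset (perm_word N \<sigma> t) = mset t"
  by (simp add: perm_word_permute_list permutes_inv)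

lemma set_perm_word:
  "\<sigma> permutes {..<N} \<Longrightarrow> length t = N \<Longrightarrow> set (perm_word N \<sigma> t) = set t"
  by (metis mset_perm_word set_mset_mset)

lemma perm_word_zip:
  assumes p: "\<sigma> permutes {..<N}" and "length w = N" "length u = N"
  shows "perm_word N \<sigma> (zip w u) = zip (perm_word N \<sigma> w) (perm_word N \<sigma> u)"
proof (rule nth_equalityI)
  fix k assume "k < length (perm_word N \<sigma> (zip w u))"
  moreover have "k < N \<Longrightarrow> inv \<sigma> k < N"
    using permutes_in_image[OF permutes_inv[OF p]] by auto
  ultimately show "perm_word N \<sigma> (zip w u) ! k = zip (perm_word N \<sigma> w) (perm_word N \<sigma> u) ! k"
    using assms by (simp add: perm_word_nth)
qed simp

lemma perm_word_inv_perm: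
  assumes p: "\<sigma> permutes {..<N}" and len: "length w = N"
  shows "perm_word N (inv \<sigma>) (perm_word N \<sigma> w) = w"
proof (rule nth_equalityI)
  fix k assume "k < length (perm_word N (inv \<sigma>) (perm_word N \<sigma> w))"
  then have "k < N" "\<sigma> k < N" using permutes_in_image[OF p] by auto
  then show "perm_word N (inv \<sigma>) (perm_word N \<sigma> w) ! k = w ! k"
    using p by (simp add: perm_word_nth inv_inv_eq permutes_bij permutes_inverses(2))
qed (simp add: len)

lemma perm_word_perm_inv:
  "\<sigma> permutes {..<N} \<Longrightarrow> length w = N \<Longrightarrow> perm_word N \<sigma> (perm_word N (inv \<sigma>) w) = w"
  using perm_word_inv_perm[OF permutes_inv] by (simp add: inv_inv_eq permutes_bij)

lemma finite_words: "finite (words d N)"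
  using finite_lists_length_eq[of "{..<d}" N] unfolding words_def by (simp add: conj_commute)

lemma perm_word_words: "\<sigma> permutes {..<N} \<Longrightarrow> w \<in> words d N \<Longrightarrow> perm_word N \<sigma> w \<in> words d N"
  unfolding words_def using set_perm_word by fastforce

lemma rev_words: "w \<in> words d N \<Longrightarrow> rev w \<in> words d N"
  unfolding words_def by auto

text \<open>Number of inversions of \<open>\<sigma>\<close> between positions of \<open>t\<close> carrying a letter with
  property \<open>Q\<close>; for \<open>Q\<close> = odd this is the exponent of the Koszul sign.\<close>

definition inv_count :: "('a \<Rightarrow> bool) \<Rightarrow> nat \<Rightarrow> (nat \<Rightarrow> nat) \<Rightarrow> 'a list \<Rightarrow> nat" where
  "inv_count Q N \<sigma> t = card {(i,j). i < j \<and> j < N \<and> \<sigma> j < \<sigma> i \<and> Q (t ! i) \<and> Q (t ! j)}"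

lemma inv_sign_eq_inv_count: "inv_sign par N \<sigma> u = inv_count par N \<sigma> u"
  by (simp add: inv_sign_def inv_count_def)

definition index_pairs :: "nat \<Rightarrow> (nat \<times> nat) set" where
  "index_pairs N = {(i,j). i < j \<and> j < N}"

lemma finite_index_pairs: "finite (index_pairs N)"
  unfolding index_pairs_def by (rule finite_subset[of _ "{..<N} \<times> {..<N}"]) auto

lemma finite_pairs: "finite {(i,j). i < j \<and> j < (N::nat) \<and> Q i j}"
  by (rule finite_subset[OF _ finite_index_pairs[of N]]) (auto simp: index_pairs_def)

text \<open>Counting pairs as a sum of indicators over all index pairs; parity
  statements about such counts then reduce to a check for each single pair.\<close>

lemma card_pairs_sum:
  "card {(i,j). i < j \<and> j < N \<and> Q i j} = (\<Sum>(i,j)\<in>index_pairs N. if Q i j then 1 else 0)"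
proof -
  have "{(i,j). i < j \<and> j < N \<and> Q i j} = {p \<in> index_pairs N. case_prod Q p}"
    unfolding index_pairs_def by auto
  then have "card {(i,j). i < j \<and> j < N \<and> Q i j} = (\<Sum>p\<in>{p \<in> index_pairs N. case_prod Q p}. 1)"
    by simp
  also have "\<dots> = (\<Sum>p\<in>index_pairs N. if case_prod Q p then 1 else 0)"
    by (rule sum.inter_filter[OF finite_index_pairs])
  finally show ?thesis by (simp add: case_prod_unfold)
qed

text \<open>Counting pairs after relabelling positions by \<open>\<sigma>\<close>: a pair of positions is
  met in the same or in the opposite order.\<close>

lemma card_pairs_permuted:
  assumes p: "\<sigma> permutes {..<N}"
  shows "card {(k,l). k < l \<and> l < N \<and> Q (inv \<sigma> k) (inv \<sigma> l)} =
     (\<Sum>(i,j)\<in>index_pairs N. (if \<sigma> i < \<sigma> j \<and> Q i j then 1 else 0)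
                             + (if \<sigma> j < \<sigma> i \<and> Q j i then 1 else 0))"
proof -
  let ?A = "{(i,j). i < N \<and> j < N \<and> \<sigma> i < \<sigma> j \<and> Q i j}"
  let ?E1 = "{(i,j). i < j \<and> j < N \<and> \<sigma> i < \<sigma> j \<and> Q i j}"
  let ?E2 = "{(i,j). i < j \<and> j < N \<and> \<sigma> j < \<sigma> i \<and> Q j i}"
  have inN: "\<sigma> x < N \<longleftrightarrow> x < N" "inv \<sigma> x < N \<longleftrightarrow> x < N" for x
    using permutes_in_image[OF p, of x] permutes_in_image[OF permutes_inv[OF p], of x] by auto
  have "bij_betw (map_prod \<sigma> \<sigma>) ?A {(k,l). k < l \<and> l < N \<and> Q (inv \<sigma> k) (inv \<sigma> l)}"
    by (rule bij_betw_byWitness[where f'="map_prod (inv \<sigma>) (inv \<sigma>)"])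
       (auto simp: permutes_inverses[OF p] inN)
  then have "card {(k,l). k < l \<and> l < N \<and> Q (inv \<sigma> k) (inv \<sigma> l)} = card ?A"
    by (simp add: bij_betw_same_card)
  also have "?A = ?E1 \<union> prod.swap ` ?E2"
    by (auto simp: image_iff) (metis linorder_neqE_nat less_irrefl)
  also have "card (?E1 \<union> prod.swap ` ?E2) = card ?E1 + card ?E2"
    by (subst card_Un_disjoint) (auto simp: finite_pairs card_image)
  also have "\<dots> = (\<Sum>(i,j)\<in>index_pairs N. (if \<sigma> i < \<sigma> j \<and> Q i j then 1 else 0)
                                     + (if \<sigma> j < \<sigma> i \<and> Q j i then 1 else 0))"
    unfolding card_pairs_sum[of N "\<lambda>i j. \<sigma> i < \<sigma> j \<and> Q i j"]
      card_pairs_sum[of N "\<lambda>i j. \<sigma> j < \<sigma> i \<and> Q j i"]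
    by (simp add: sum.distrib[symmetric] case_prod_unfold)
  finally show ?thesis .
qed

lemma card_pairs_Suc:
  "card {(i,j). i < j \<and> j < Suc n \<and> Q i j} =
     card {j. j < n \<and> Q 0 (Suc j)} + card {(i,j). i < j \<and> j < n \<and> Q (Suc i) (Suc j)}"
proof -
  let ?A = "{j. j < n \<and> Q 0 (Suc j)}" and ?B = "{(i,j). i < j \<and> j < n \<and> Q (Suc i) (Suc j)}"
  have "{(i,j). i < j \<and> j < Suc n \<and> Q i j} = Pair 0 ` Suc ` ?A \<union> map_prod Suc Suc ` ?B"
    by (auto simp: image_iff gr0_conv_Suc less_Suc_eq_0_disj)
  moreover have "card (Pair 0 ` Suc ` ?A \<union> map_prod Suc Suc ` ?B) = card ?A + card ?B"
    by (subst card_Un_disjoint) (auto simp: finite_pairs card_image inj_on_def)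
  ultimately show ?thesis by simp
qed

text \<open>The order-reversing permutation of positions and conjugation by it; the
  pairing between \<open>(V^*)^{\<otimes>N}\<close> and \<open>V^{\<otimes>N}\<close> reverses tensor factors.\<close>

definition rev_index :: "nat \<Rightarrow> nat \<Rightarrow> nat" where
  "rev_index N i = (if i < N then N - 1 - i else i)"

definition rev_conj :: "nat \<Rightarrow> (nat \<Rightarrow> nat) \<Rightarrow> nat \<Rightarrow> nat" where
  "rev_conj N \<sigma> = rev_index N \<circ> \<sigma> \<circ> rev_index N"

lemma rev_index_rev_index [simp]: "rev_index N (rev_index N i) = i"
  by (simp add: rev_index_def)

lemma rev_index_lt: "i < N \<Longrightarrow> rev_index N i < N"
  by (simp add: rev_index_def)

lemma rev_index_less_iff: "a < N \<Longrightarrow> b < N \<Longrightarrow> rev_index N a < rev_index N b \<longleftrightarrow> b < a"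
  by (auto simp: rev_index_def)

lemma rev_index_permutes: "rev_index N permutes {..<N}"
  unfolding permutes_def
proof (intro conjI allI impI)
  fix x assume "x \<notin> {..<N}" then show "rev_index N x = x" by (simp add: rev_index_def)
next
  fix y show "\<exists>!x. rev_index N x = y"
    by (rule ex1I[of _ "rev_index N y"]) (simp, metis rev_index_rev_index)
qed

lemma rev_conj_permutes: "\<sigma> permutes {..<N} \<Longrightarrow> rev_conj N \<sigma> permutes {..<N}"
  unfolding rev_conj_def by (intro permutes_compose rev_index_permutes) auto

lemma rev_conj_rev_conj: "rev_conj N (rev_conj N \<sigma>) = \<sigma>"
  unfolding rev_conj_def by (rule ext) simp

lemma sign_rev_conj:
  assumes p: "\<sigma> permutes {..<N}" shows "sign (rev_conj N \<sigma>) = sign \<sigma>"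
proof -
  have pr: "permutation (rev_index N)" and ps: "permutation \<sigma>"
    using rev_index_permutes p permutation_permutes by blast+
  have "sign (rev_conj N \<sigma>) = sign (rev_index N) * sign \<sigma> * sign (rev_index N)"
    unfolding rev_conj_def using pr ps by (simp add: sign_compose permutation_compose)
  then show ?thesis by (metis mult.commute mult.left_commute sign_idempotent mult_1_right)
qed

lemma perm_word_rev_conj:
  assumes p: "\<sigma> permutes {..<N}" and len: "length w = N"
  shows "perm_word N (rev_conj N \<sigma>) (rev w) = rev (perm_word N \<sigma> w)"
proof (rule nth_equalityI)
  fix k assume "k < length (perm_word N (rev_conj N \<sigma>) (rev w))"
  then have k: "k < N" by simp
  have inv_conj: "inv (rev_conj N \<sigma>) k = rev_index N (inv \<sigma> (rev_index N k))"
    using permutes_inv_eq[OF rev_conj_permutes[OF p]] permutes_inverses(1)[OF p]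
    by (simp add: rev_conj_def)
  have x: "inv \<sigma> (rev_index N k) < N"
    using permutes_in_image[OF permutes_inv[OF p]] rev_index_lt[OF k] by auto
  show "perm_word N (rev_conj N \<sigma>) (rev w) ! k = rev (perm_word N \<sigma> w) ! k"
    using k x len rev_index_lt[OF x]
    by (simp add: perm_word_nth inv_conj rev_nth rev_index_def)
qed simp

lemma inv_count_rev_conj:
  assumes p: "\<sigma> permutes {..<N}" and len: "length w = N"
  shows "inv_count Q N (rev_conj N \<sigma>) (rev w) = inv_count Q N \<sigma> w"
proof -
  let ?A = "{(i,j). i < j \<and> j < N \<and> rev_conj N \<sigma> j < rev_conj N \<sigma> i \<and> Q (rev w ! i) \<and> Q (rev w ! j)}"
  let ?B = "{(i,j). i < j \<and> j < N \<and> \<sigma> j < \<sigma> i \<and> Q (w ! i) \<and> Q (w ! j)}"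
  have inN: "x < N \<Longrightarrow> \<sigma> x < N" for x using permutes_in_image[OF p, of x] by simp
  have rev_nth': "x < N \<Longrightarrow> rev w ! x = w ! rev_index N x" for x
    using len by (simp add: rev_nth rev_index_def)
  have conj_less: "i < N \<Longrightarrow> j < N \<Longrightarrow>
      rev_conj N \<sigma> j < rev_conj N \<sigma> i \<longleftrightarrow> \<sigma> (rev_index N i) < \<sigma> (rev_index N j)" for i j
    unfolding rev_conj_def o_def
    using rev_index_less_iff[OF inN[OF rev_index_lt[of j]] inN[OF rev_index_lt[of i]]] by simp
  have "bij_betw (\<lambda>(i,j). (rev_index N j, rev_index N i)) ?A ?B"
    by (rule bij_betw_byWitness[where f'="\<lambda>(i,j). (rev_index N j, rev_index N i)"])
       (auto simp: conj_less rev_nth' rev_index_lt rev_index_less_iff)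
  then show ?thesis unfolding inv_count_def by (simp add: bij_betw_same_card)
qed

section \<open>Reordering monomials in the supercommutative algebra\<close>

lemma supercomm_swap:
  assumes "a \<in> {..<d} \<times> {..<d}" "b \<in> {..<d} \<times> {..<d}"
  shows "congr (supercomm_ideal par d) (mono (a # b # ys))
           (fa_smult (if gpar par a \<and> gpar par b then -1 else 1) (mono (b # a # ys))
            :: (nat \<times> nat,'k::field) fa)"
proof -
  let ?s = "(if gpar par a \<and> gpar par b then -1 else 1) :: 'k"
  have "(\<lambda>w. mono [a,b] w - fa_smult ?s (mono [b,a]) w) \<in> supercomm_ideal par d"
    unfolding supercomm_ideal_def using assms
    by (intro gen_ideal.base) (auto simp: gen_def fa_mul_mono_mono fa_smult_def)
  then have "fa_mul (\<lambda>w. mono [a,b] w - fa_smult ?s (mono [b,a]) w) (mono ys)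
               \<in> supercomm_ideal par d"
    unfolding supercomm_ideal_eq by (rule gen_ideal.rmul[OF _ fin_mono])
  then show ?thesis
    unfolding congr_def by (simp add: fa_mul_diff_left fa_mul_smult_left fa_mul_mono_mono)
qed

lemma supercomm_square:
  assumes "a \<in> {..<d} \<times> {..<d}" "gpar par a"
  shows "mono (ys @ a # a # zs) \<in> (supercomm_ideal par d :: (nat \<times> nat,'k::field) fa set)"
proof -
  have "mono [a,a] \<in> (supercomm_ideal par d :: (nat \<times> nat,'k) fa set)"
    unfolding supercomm_ideal_def using assms
    by (intro gen_ideal.base) (auto simp: gen_def fa_mul_mono_mono)
  then have "fa_mul (mono ys) (fa_mul (mono [a,a]) (mono zs))
               \<in> (supercomm_ideal par d :: (nat \<times> nat,'k) fa set)"
    unfolding supercomm_ideal_eq by (intro gen_ideal.lmul gen_ideal.rmul fin_mono)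
  then show ?thesis by (simp add: fa_mul_mono_mono)
qed

text \<open>Number of pairs of odd generators standing in decreasing order; sorting a
  word multiplies its monomial by \<open>(-1)\<close> to this number.\<close>

fun odd_disorder :: "(nat \<Rightarrow> bool) \<Rightarrow> (nat \<times> nat) list \<Rightarrow> nat" where
  "odd_disorder par [] = 0"
| "odd_disorder par (g # t) =
     length (filter (\<lambda>h. h < g \<and> gpar par g \<and> gpar par h) t) + odd_disorder par t"

lemma insort_congr:
  assumes "sorted xs" "set xs \<subseteq> {..<d} \<times> {..<d}" "g \<in> {..<d} \<times> {..<d}"
  shows "congr (supercomm_ideal par d) (mono (g # xs))
     (fa_smult (psign (length (filter (\<lambda>h. h < g \<and> gpar par g \<and> gpar par h) xs)))
        (mono (insort g xs)) :: (nat \<times> nat,'k::field) fa)"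
  using assms
proof (induction xs)
  case Nil
  then show ?case by (simp add: psign_def supercomm_refl)
next
  case (Cons x xs)
  let ?P = "\<lambda>h. h < g \<and> gpar par g \<and> gpar par h"
  show ?case
  proof (cases "g \<le> x")
    case True
    then have "filter ?P (x # xs) = []"
      using Cons.prems(1) by (auto intro!: filter_False simp: not_less)
    then show ?thesis using True by (simp add: psign_def supercomm_refl)
  next
    case False
    let ?s = "(if gpar par g \<and> gpar par x then -1 else 1) :: 'k"
    have swap: "congr (supercomm_ideal par d) (mono (g # x # xs)) (fa_smult ?s (mono (x # g # xs)))"
      using supercomm_swap[of g d x par xs] Cons.prems by simp
    have tail: "congr (supercomm_ideal par d) (mono (x # g # xs))
       (fa_smult (psign (length (filter ?P xs))) (mono (x # insort g xs)) :: (nat \<times> nat,'k) fa)"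
      using supercomm_lmul[OF fin_mono[of "[x]"] Cons.IH] Cons.prems
      by (simp add: fa_mul_mono_mono fa_mul_smult_right)
    have "congr (supercomm_ideal par d) (mono (g # x # xs))
       (fa_smult (?s * psign (length (filter ?P xs))) (mono (x # insort g xs)))"
      by (rule supercomm_trans[OF swap supercomm_smult[OF tail, of ?s, unfolded fa_smult_smult]])
    moreover have "?s * psign (length (filter ?P xs)) = psign (length (filter ?P (x # xs)))"
      using False by (simp add: psign_def not_le)
    ultimately show ?thesis using False by simp
  qed
qed

lemma length_filter_sort: "length (filter P (sort t)) = length (filter P t)"
  by (metis mset_filter mset_sort size_mset)

lemma sort_congr:
  assumes "set t \<subseteq> {..<d} \<times> {..<d}"
  shows "congr (supercomm_ideal par d) (mono t)
           (fa_smult (psign (odd_disorder par t)) (mono (sort t)) :: (nat \<times> nat,'k::field) fa)"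
  using assms
proof (induction t)
  case Nil
  then show ?case by (simp add: psign_def supercomm_refl)
next
  case (Cons g t)
  have "congr (supercomm_ideal par d) (mono (g # t))
          (fa_smult (psign (odd_disorder par t)) (mono (g # sort t)) :: (nat \<times> nat,'k) fa)"
    using supercomm_lmul[OF fin_mono[of "[g]"] Cons.IH] Cons.prems
    by (simp add: fa_mul_mono_mono fa_mul_smult_right)
  moreover have "congr (supercomm_ideal par d) (mono (g # sort t))
     (fa_smult (psign (length (filter (\<lambda>h. h < g \<and> gpar par g \<and> gpar par h) t)))
        (mono (insort g (sort t))) :: (nat \<times> nat,'k) fa)"
    using insort_congr[of "sort t" d g par] Cons.prems by (simp add: length_filter_sort)
  ultimately show ?case
    using supercomm_trans[OF _ supercomm_smult] by (fastforce simp: fa_smult_smult psign_add mult.commute)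
qed

lemma sorted_repeated_adjacent:
  assumes "sorted xs" "count (mset xs) a \<ge> 2"
  shows "\<exists>ys zs. xs = ys @ a # a # zs"
  using assms
proof (induction xs)
  case Nil then show ?case by simp
next
  case (Cons x xs)
  show ?case
  proof (cases "x = a")
    case True
    then have "a \<in> set xs" using Cons.prems by (simp add: count_eq_zero_iff[symmetric])
    then obtain y ys where xs: "xs = y # ys" by (cases xs) auto
    have "y = a"
      using Cons.prems xs True \<open>a \<in> set xs\<close> by (auto intro: order_antisym)
    then show ?thesis using True xs by (metis append_Nil)
  next
    case False
    then obtain ys zs where "xs = ys @ a # a # zs" using Cons by auto
    then show ?thesis by (metis append_Cons)
  qed
qed

lemma repeated_odd_in_ideal:
  assumes G: "set t \<subseteq> {..<d} \<times> {..<d}" and odd: "gpar par a" and twice: "count (mset t) a \<ge> 2"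
  shows "mono t \<in> (supercomm_ideal par d :: (nat \<times> nat,'k::field) fa set)"
proof -
  obtain ys zs where sorted: "sort t = ys @ a # a # zs"
    using sorted_repeated_adjacent[of "sort t" a] twice by auto
  have "count (mset t) a \<noteq> 0" using twice by linarith
  then have "a \<in> set t" by simp
  then have "mono (sort t) \<in> (supercomm_ideal par d :: (nat \<times> nat,'k) fa set)"
    unfolding sorted using G odd by (intro supercomm_square) auto
  then have "fa_smult (psign (odd_disorder par t)) (mono (sort t))
               \<in> (supercomm_ideal par d :: (nat \<times> nat,'k) fa set)"
    unfolding supercomm_ideal_eq by (rule gen_ideal.smult)
  with sort_congr[OF G, of par] have "(\<lambda>w. (mono t w - fa_smult (psign (odd_disorder par t))
      (mono (sort t)) w) + fa_smult (psign (odd_disorder par t)) (mono (sort t)) w)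
        \<in> (supercomm_ideal par d :: (nat \<times> nat,'k) fa set)"
    unfolding congr_def supercomm_ideal_eq by (intro gen_ideal.add)
  then show ?thesis by simp
qed

lemma odd_disorder_card:
  "odd_disorder par t =
     card {(i,j). i < j \<and> j < length t \<and> t ! j < t ! i \<and> gpar par (t ! i) \<and> gpar par (t ! j)}"
proof (induction t)
  case Nil then show ?case by simp
next
  case (Cons g t)
  have "length (filter (\<lambda>h. h < g \<and> gpar par g \<and> gpar par h) t) =
        card {j. j < length t \<and> t ! j < g \<and> gpar par g \<and> gpar par (t ! j)}"
    by (simp add: length_filter_conv_card)
  then show ?case
    using card_pairs_Suc[where n="length t" and
        Q="\<lambda>i j. (g # t) ! j < (g # t) ! i \<and> gpar par ((g # t) ! i) \<and> gpar par ((g # t) ! j)"]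
      Cons.IH by simp
qed

lemma odd_disorder_perm_parity:
  assumes p: "\<sigma> permutes {..<N}" and len: "length t = N"
    and dist: "\<forall>i<N. \<forall>j<N. i \<noteq> j \<longrightarrow> gpar par (t ! i) \<longrightarrow> gpar par (t ! j) \<longrightarrow> t ! i \<noteq> t ! j"
  shows "even (odd_disorder par (perm_word N \<sigma> t) + odd_disorder par t + inv_count (gpar par) N \<sigma> t)"
proof -
  let ?Q = "\<lambda>i j. t ! j < t ! i \<and> gpar par (t ! i) \<and> gpar par (t ! j)"
  let ?O = "\<lambda>i j. gpar par (t ! i) \<and> gpar par (t ! j)"
  have "odd_disorder par (perm_word N \<sigma> t) = card {(k,l). k < l \<and> l < N \<and> ?Q (inv \<sigma> k) (inv \<sigma> l)}"
    unfolding odd_disorder_card by (rule arg_cong[where f=card]) (auto simp: perm_word_nth)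
  also have "\<dots> = (\<Sum>(i,j)\<in>index_pairs N. (if \<sigma> i < \<sigma> j \<and> ?Q i j then 1 else 0)
                                         + (if \<sigma> j < \<sigma> i \<and> ?Q j i then 1 else 0))"
    by (rule card_pairs_permuted[OF p])
  finally have permuted: "odd_disorder par (perm_word N \<sigma> t) = \<dots>" .
  have original: "odd_disorder par t = (\<Sum>(i,j)\<in>index_pairs N. if ?Q i j then 1 else 0)"
    unfolding odd_disorder_card len by (rule card_pairs_sum)
  have inversions: "inv_count (gpar par) N \<sigma> t =
                      (\<Sum>(i,j)\<in>index_pairs N. if \<sigma> j < \<sigma> i \<and> ?O i j then 1 else 0)"
    unfolding inv_count_def by (rule card_pairs_sum)
  have "even ((if \<sigma> i < \<sigma> j \<and> ?Q i j then 1 else 0) + (if \<sigma> j < \<sigma> i \<and> ?Q j i then 1 else 0)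
     + (if ?Q i j then 1 else 0) + (if \<sigma> j < \<sigma> i \<and> ?O i j then 1 else (0::nat)))"
    if "(i,j) \<in> index_pairs N" for i j
  proof -
    have ij: "i < j" "j < N" using that by (auto simp: index_pairs_def)
    then have "\<sigma> i \<noteq> \<sigma> j" using permutes_inj[OF p] by (metis injD less_irrefl)
    moreover have "?O i j \<Longrightarrow> t ! i \<noteq> t ! j" using dist ij by auto
    ultimately show ?thesis by (cases "\<sigma> j < \<sigma> i"; cases "t ! j < t ! i") auto
  qed
  then have "even (\<Sum>(i,j)\<in>index_pairs N. (if \<sigma> i < \<sigma> j \<and> ?Q i j then 1 else 0)
      + (if \<sigma> j < \<sigma> i \<and> ?Q j i then 1 else 0)
      + (if ?Q i j then 1 else 0) + (if \<sigma> j < \<sigma> i \<and> ?O i j then 1 else (0::nat)))"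
    by (intro dvd_sum) auto
  then show ?thesis
    unfolding permuted original inversions by (simp add: sum.distrib case_prod_unfold)
qed

lemma supercomm_reorder:
  assumes G: "set t \<subseteq> {..<d} \<times> {..<d}" and len: "length t = N" and p: "\<sigma> permutes {..<N}"
  shows "congr (supercomm_ideal par d) (mono (perm_word N \<sigma> t))
           (fa_smult (psign (inv_count (gpar par) N \<sigma> t)) (mono t) :: (nat \<times> nat,'k::field) fa)"
proof (cases "\<forall>i<N. \<forall>j<N. i \<noteq> j \<longrightarrow> gpar par (t ! i) \<longrightarrow> gpar par (t ! j) \<longrightarrow> t ! i \<noteq> t ! j")
  case True
  have sort_eq: "sort (perm_word N \<sigma> t) = sort t"
    by (rule properties_for_sort) (simp_all add: mset_perm_word[OF p len])
  have GP: "set (perm_word N \<sigma> t) \<subseteq> {..<d} \<times> {..<d}" using set_perm_word[OF p len] G by simp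
  have "congr (supercomm_ideal par d) (fa_smult (psign (odd_disorder par t)) (mono t))
          (mono (sort t) :: (nat \<times> nat,'k) fa)"
    using supercomm_smult[OF sort_congr[OF G, of par], where c = "psign (odd_disorder par t)"]
    by (simp add: fa_smult_smult psign_sq)
  then have sorted_back: "congr (supercomm_ideal par d) (mono (sort t))
          (fa_smult (psign (odd_disorder par t)) (mono t) :: (nat \<times> nat,'k) fa)"
    by (rule supercomm_sym)
  have "congr (supercomm_ideal par d) (mono (perm_word N \<sigma> t))
      (fa_smult (psign (odd_disorder par (perm_word N \<sigma> t)) * psign (odd_disorder par t)) (mono t)
        :: (nat \<times> nat,'k) fa)"
    using supercomm_trans[OF sort_congr[OF GP, of par, unfolded sort_eq] supercomm_smult[OF sorted_back]]
    by (simp add: fa_smult_smult)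
  moreover have "psign (odd_disorder par (perm_word N \<sigma> t)) * psign (odd_disorder par t)
                   = (psign (inv_count (gpar par) N \<sigma> t) :: 'k)"
    using psign_even[OF odd_disorder_perm_parity[OF p len True]] by (simp add: psign_add)
  ultimately show ?thesis by simp
next
  case False
  then obtain i j where ij: "i < N" "j < N" "i \<noteq> j" "gpar par (t ! i)" "t ! i = t ! j" by blast
  have "card {i, j} \<le> card {k. k < length t \<and> t ! i = t ! k}"
    using ij len by (intro card_mono) auto
  then have twice: "count (mset t) (t ! i) \<ge> 2"
    using ij(3) by (simp add: count_mset count_list_eq_length_filter length_filter_conv_card)
  have GP: "set (perm_word N \<sigma> t) \<subseteq> {..<d} \<times> {..<d}" using set_perm_word[OF p len] G by simp
  have "mono (perm_word N \<sigma> t) \<in> (supercomm_ideal par d :: (nat \<times> nat,'k) fa set)"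
    using repeated_odd_in_ideal[OF GP ij(4)] twice by (simp add: mset_perm_word[OF p len])
  moreover have "fa_smult (psign (inv_count (gpar par) N \<sigma> t)) (mono t)
                   \<in> (supercomm_ideal par d :: (nat \<times> nat,'k) fa set)"
    using repeated_odd_in_ideal[OF G ij(4) twice] unfolding supercomm_ideal_eq
    by (rule gen_ideal.smult)
  ultimately show ?thesis by (rule supercomm_members)
qed

section \<open>A sign identity\<close>

definition cross_inv :: "(nat \<Rightarrow> bool) \<Rightarrow> nat \<Rightarrow> (nat \<Rightarrow> nat) \<Rightarrow> nat list \<Rightarrow> nat list \<Rightarrow> nat" where
  "cross_inv par N \<sigma> w u = card {(i,j). i < j \<and> j < N \<and> \<sigma> j < \<sigma> i \<and> par (w ! i) \<and> par (u ! j)}"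

text \<open>The parity of the generator \<open>z^{w_i}_{u_i}\<close> is \<open>|w_i| + |u_i|\<close>, so the odd
  inversions of the zipped word split into four kinds of inversions, mod 2.\<close>

lemma inv_count_zip_parity:
  assumes lw: "length w = N" and lu: "length u = N"
  shows "even (inv_count par N \<sigma> u + inv_count (gpar par) N \<sigma> (zip w u) + inv_count par N \<sigma> w
               + cross_inv par N \<sigma> w u + cross_inv par N \<sigma> u w)"
proof -
  have zipped: "inv_count (gpar par) N \<sigma> (zip w u) = card {(i,j). i < j \<and> j < N \<and> \<sigma> j < \<sigma> i
      \<and> (par (w ! i) \<noteq> par (u ! i)) \<and> (par (w ! j) \<noteq> par (u ! j))}"
    unfolding inv_count_def by (rule arg_cong[where f=card]) (auto simp: gpar_def lw lu)
  show ?thesis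
    unfolding zipped unfolding inv_count_def cross_inv_def card_pairs_sum
    by (simp only: sum.distrib[symmetric] case_prod_unfold, rule dvd_sum)
       (auto simp: index_pairs_def lw lu)
qed

lemma pi_sign_perm_parity:
  assumes p: "\<sigma> permutes {..<N}"
  shows "even (pi_sign par N (perm_word N \<sigma> w) (perm_word N \<sigma> u) + pi_sign par N w u
               + cross_inv par N \<sigma> w u + cross_inv par N \<sigma> u w)"
proof -
  let ?R = "\<lambda>i j. par (u ! i) \<and> par (w ! j)"
  have "pi_sign par N (perm_word N \<sigma> w) (perm_word N \<sigma> u)
          = card {(k,l). k < l \<and> l < N \<and> ?R (inv \<sigma> k) (inv \<sigma> l)}"
    unfolding pi_sign_def by (rule arg_cong[where f=card]) (auto simp: perm_word_nth)
  also have "\<dots> = (\<Sum>(i,j)\<in>index_pairs N. (if \<sigma> i < \<sigma> j \<and> ?R i j then 1 else 0)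
                                         + (if \<sigma> j < \<sigma> i \<and> ?R j i then 1 else 0))"
    by (rule card_pairs_permuted[OF p])
  finally have permuted: "pi_sign par N (perm_word N \<sigma> w) (perm_word N \<sigma> u) = \<dots>" .
  have "even ((if \<sigma> i < \<sigma> j \<and> ?R i j then 1 else 0) + (if \<sigma> j < \<sigma> i \<and> ?R j i then 1 else 0)
     + (if ?R i j then 1 else 0) + (if \<sigma> j < \<sigma> i \<and> par (w ! i) \<and> par (u ! j) then 1 else 0)
     + (if \<sigma> j < \<sigma> i \<and> par (u ! i) \<and> par (w ! j) then 1 else (0::nat)))"
    if "(i,j) \<in> index_pairs N" for i j
  proof -
    have "\<sigma> i \<noteq> \<sigma> j"
      using that permutes_inj[OF p] by (auto simp: index_pairs_def dest: injD)
    then show ?thesis by (cases "\<sigma> j < \<sigma> i") auto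
  qed
  then have "even (\<Sum>(i,j)\<in>index_pairs N. (if \<sigma> i < \<sigma> j \<and> ?R i j then 1 else 0)
      + (if \<sigma> j < \<sigma> i \<and> ?R j i then 1 else 0) + (if ?R i j then 1 else 0)
      + (if \<sigma> j < \<sigma> i \<and> par (w ! i) \<and> par (u ! j) then 1 else 0)
      + (if \<sigma> j < \<sigma> i \<and> par (u ! i) \<and> par (w ! j) then 1 else (0::nat)))"
    by (intro dvd_sum) auto
  then show ?thesis
    unfolding permuted unfolding pi_sign_def cross_inv_def card_pairs_sum
    by (simp add: sum.distrib case_prod_unfold)
qed

lemma sign_identity:
  assumes p: "\<sigma> permutes {..<N}" and lw: "length w = N" and lu: "length u = N"
  shows "psign (inv_count par N \<sigma> u) * psign (inv_count (gpar par) N \<sigma> (zip w u))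
           * psign (pi_sign par N (perm_word N \<sigma> w) (perm_word N \<sigma> u))
         = (psign (pi_sign par N w u) * psign (inv_count par N (rev_conj N \<sigma>) (rev w)) :: 'k::comm_ring_1)"
proof -
  have "even ((inv_count par N \<sigma> u + inv_count (gpar par) N \<sigma> (zip w u)
               + pi_sign par N (perm_word N \<sigma> w) (perm_word N \<sigma> u))
              + (pi_sign par N w u + inv_count par N (rev_conj N \<sigma>) (rev w)))"
    using inv_count_zip_parity[OF lw lu, of par \<sigma>] pi_sign_perm_parity[OF p, of par w u]
    unfolding inv_count_rev_conj[OF p lw] by presburger
  then show ?thesis by (metis psign_even psign_add)
qed

section \<open>Orthogonality to the relations of \<open>S_N(V)\<close>\<close>

lemma cperm_eq:
  "cperm par N \<sigma> u v = psign (inv_count par N \<sigma> u) * (if v = perm_word N \<sigma> u then 1 else 0)"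
  by (simp add: cperm_def fa_smult_def mono_def perm_word_def inv_sign_eq_inv_count)

lemma cY_eq:
  "cY par N x v = (\<Sum>\<sigma>\<in>perms N. of_int (sign \<sigma>) * psign (inv_count par N \<sigma> x)
                                   * (if v = perm_word N \<sigma> x then 1 else 0)) / of_nat (fact N)"
  by (simp add: cY_def cperm_eq mult.assoc)

lemma sum_words_perm:
  assumes p: "\<sigma> permutes {..<N}"
  shows "(\<Sum>w\<in>words d N. g (perm_word N \<sigma> w)) = (\<Sum>w\<in>words d N. g w)"
proof (rule sum.reindex_bij_witness[where i="perm_word N (inv \<sigma>)" and j="perm_word N \<sigma>"])
  fix w assume w: "w \<in> words d N"
  then have len: "length w = N" by (simp add: words_def)
  show "perm_word N (inv \<sigma>) (perm_word N \<sigma> w) = w" by (rule perm_word_inv_perm[OF p len])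
  show "perm_word N \<sigma> w \<in> words d N" by (rule perm_word_words[OF p w])
  show "perm_word N \<sigma> (perm_word N (inv \<sigma>) w) = w" by (rule perm_word_perm_inv[OF p len])
  show "perm_word N (inv \<sigma>) w \<in> words d N" by (rule perm_word_words[OF permutes_inv[OF p] w])
qed simp

lemma sum_times_cY:
  fixes F :: "nat list \<Rightarrow> 'k::field"
  assumes x: "x \<in> words d N"
  shows "(\<Sum>v\<in>words d N. F v * cY par N x v) =
           (\<Sum>\<tau>\<in>perms N. of_int (sign \<tau>) * psign (inv_count par N \<tau> x) * F (perm_word N \<tau> x))
             / of_nat (fact N)"
proof -
  let ?a = "\<lambda>\<tau>. of_int (sign \<tau>) * psign (inv_count par N \<tau> x) :: 'k"
  have "(\<Sum>v\<in>words d N. F v * cY par N x v) =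
          (\<Sum>v\<in>words d N. \<Sum>\<tau>\<in>perms N. if v = perm_word N \<tau> x then ?a \<tau> * F v else 0)
            / of_nat (fact N)"
    unfolding cY_eq sum_divide_distrib
    by (intro sum.cong refl) (simp add: sum_distrib_left, intro sum.cong refl, simp)
  also have "\<dots> = (\<Sum>\<tau>\<in>perms N. ?a \<tau> * F (perm_word N \<tau> x)) / of_nat (fact N)"
    using perm_word_words[OF _ x]
    by (subst sum.swap) (simp add: sum.delta' finite_words)
  finally show ?thesis .
qed

lemma rperp_orthogonal:
  fixes f :: "(nat, 'k::field) fa"
  assumes f: "f \<in> Rperp par d N" and x: "x \<in> words d N" and nf: "of_nat (fact N) \<noteq> (0::'k)"
  shows "(\<Sum>\<tau>\<in>perms N. of_int (sign \<tau>) * psign (inv_count par N \<tau> x) * f (rev (perm_word N \<tau> x))) = 0"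
proof -
  have "cY par N x \<in> Rsp par d N" unfolding Rsp_def using x by (intro lin_span.base) blast
  then have "(\<Sum>v\<in>words d N. f (rev v) * cY par N x v) = 0" using f unfolding Rperp_def by blast
  then show ?thesis using nf by (simp add: sum_times_cY[OF x])
qed

lemma fact_nonzero:
  assumes "CHAR('k::field) = 0 \<or> CHAR('k) > N"
  shows "of_nat (fact N) \<noteq> (0::'k)"
proof -
  have "of_nat i \<noteq> (0::'k)" if "1 \<le> i" "i \<le> N" for i
  proof
    assume "of_nat i = (0::'k)"
    then have "CHAR('k) dvd i" by (simp add: of_nat_eq_0_iff_char_dvd)
    then show False using assms that by (auto dest: dvd_imp_le)
  qed
  then show ?thesis by (simp add: fact_prod prod_zero_iff)
qed

section \<open>The relations of \<open>end S_N(V)\<close> hold in \<open>O(E(V))\<close>\<close>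

lemma cpi_linear:
  "cpi par d N f r t =
     (\<Sum>u\<in>words d N. r u * (\<Sum>w\<in>words d N. if t = zip w u then f w * psign (pi_sign par N w u) else 0))"
  unfolding cpi_def
  by (subst sum.swap) (intro sum.cong refl, simp add: sum_distrib_left, intro sum.cong refl, simp)

lemma cpi_cY_expand:
  fixes f :: "(nat, 'k::field) fa"
  assumes u: "u \<in> words d N"
  shows "cpi par d N f (cY par N u) = (\<lambda>t. \<Sum>\<sigma>\<in>perms N. \<Sum>w\<in>words d N.
     of_int (sign \<sigma>) * psign (inv_count par N \<sigma> u) / of_nat (fact N) * f (perm_word N \<sigma> w)
       * psign (pi_sign par N (perm_word N \<sigma> w) (perm_word N \<sigma> u))
       * mono (perm_word N \<sigma> (zip w u)) t)"
proof
  fix t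
  let ?K = "\<lambda>v. \<Sum>w\<in>words d N. if t = zip w v then f w * psign (pi_sign par N w v) else (0::'k)"
  have lu: "length u = N" using u by (simp add: words_def)
  have K: "?K (perm_word N \<sigma> u) = (\<Sum>w\<in>words d N. f (perm_word N \<sigma> w)
       * psign (pi_sign par N (perm_word N \<sigma> w) (perm_word N \<sigma> u)) * mono (perm_word N \<sigma> (zip w u)) t)"
    if p: "\<sigma> permutes {..<N}" for \<sigma>
  proof -
    have "?K (perm_word N \<sigma> u) = (\<Sum>w\<in>words d N.
        if t = zip (perm_word N \<sigma> w) (perm_word N \<sigma> u)
        then f (perm_word N \<sigma> w) * psign (pi_sign par N (perm_word N \<sigma> w) (perm_word N \<sigma> u)) else 0)"
      by (rule sum_words_perm[OF p, symmetric])
    also have "\<dots> = (\<Sum>w\<in>words d N. f (perm_word N \<sigma> w)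
       * psign (pi_sign par N (perm_word N \<sigma> w) (perm_word N \<sigma> u)) * mono (perm_word N \<sigma> (zip w u)) t)"
      by (intro sum.cong refl) (auto simp: mono_def words_def perm_word_zip[OF p _ lu])
    finally show ?thesis .
  qed
  have "cpi par d N f (cY par N u) t = (\<Sum>v\<in>words d N. ?K v * cY par N u v)"
    unfolding cpi_linear by (simp add: mult.commute)
  also have "\<dots> = (\<Sum>\<sigma>\<in>perms N. of_int (sign \<sigma>) * psign (inv_count par N \<sigma> u)
                    * ?K (perm_word N \<sigma> u)) / of_nat (fact N)"
    by (rule sum_times_cY[OF u])
  also have "\<dots> = (\<Sum>\<sigma>\<in>perms N. of_int (sign \<sigma>) * psign (inv_count par N \<sigma> u)
                    * (\<Sum>w\<in>words d N. f (perm_word N \<sigma> w)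
                       * psign (pi_sign par N (perm_word N \<sigma> w) (perm_word N \<sigma> u))
                       * mono (perm_word N \<sigma> (zip w u)) t)) / of_nat (fact N)"
    using K by (intro arg_cong[where f="\<lambda>x. x / _"] sum.cong refl) simp
  finally show "cpi par d N f (cY par N u) t = (\<Sum>\<sigma>\<in>perms N. \<Sum>w\<in>words d N.
     of_int (sign \<sigma>) * psign (inv_count par N \<sigma> u) / of_nat (fact N) * f (perm_word N \<sigma> w)
       * psign (pi_sign par N (perm_word N \<sigma> w) (perm_word N \<sigma> u))
       * mono (perm_word N \<sigma> (zip w u)) t)"
    by (simp add: sum_divide_distrib sum_distrib_left mult.assoc)
qed

text \<open>After reordering the monomials to \<open>z^w_u\<close>, the coefficient of each of them is
  a vanishing sum, by the sign identity and orthogonality.\<close>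

lemma coefficient_vanishes:
  fixes f :: "(nat, 'k::field) fa"
  assumes f: "f \<in> Rperp par d N" and u: "u \<in> words d N" and w: "w \<in> words d N"
    and nf: "of_nat (fact N) \<noteq> (0::'k)"
  shows "(\<Sum>\<sigma>\<in>perms N. of_int (sign \<sigma>) * psign (inv_count par N \<sigma> u) / of_nat (fact N)
            * f (perm_word N \<sigma> w) * psign (pi_sign par N (perm_word N \<sigma> w) (perm_word N \<sigma> u))
            * psign (inv_count (gpar par) N \<sigma> (zip w u))) = (0::'k)"
proof -
  let ?c = "psign (pi_sign par N w u) / of_nat (fact N) :: 'k"
  let ?g = "\<lambda>\<tau>. of_int (sign \<tau>) * psign (inv_count par N \<tau> (rev w))
                 * f (rev (perm_word N \<tau> (rev w))) :: 'k"
  have lw: "length w = N" and lu: "length u = N" using w u by (auto simp: words_def)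
  have "of_int (sign \<sigma>) * psign (inv_count par N \<sigma> u) / of_nat (fact N)
          * f (perm_word N \<sigma> w) * psign (pi_sign par N (perm_word N \<sigma> w) (perm_word N \<sigma> u))
          * psign (inv_count (gpar par) N \<sigma> (zip w u)) = ?c * ?g (rev_conj N \<sigma>)"
    if p: "\<sigma> permutes {..<N}" for \<sigma>
    using sign_identity[OF p lw lu, of par, where 'k='k] perm_word_rev_conj[OF p lw] sign_rev_conj[OF p]
    by (simp add: field_simps)
  then have "(\<Sum>\<sigma>\<in>perms N. of_int (sign \<sigma>) * psign (inv_count par N \<sigma> u) / of_nat (fact N)
            * f (perm_word N \<sigma> w) * psign (pi_sign par N (perm_word N \<sigma> w) (perm_word N \<sigma> u))
            * psign (inv_count (gpar par) N \<sigma> (zip w u))) = (\<Sum>\<sigma>\<in>perms N. ?c * ?g (rev_conj N \<sigma>))"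
    by (intro sum.cong refl) simp
  also have "\<dots> = ?c * (\<Sum>\<sigma>\<in>perms N. ?g (rev_conj N \<sigma>))"
    by (rule sum_distrib_left[symmetric])
  also have "(\<Sum>\<sigma>\<in>perms N. ?g (rev_conj N \<sigma>)) = (\<Sum>\<tau>\<in>perms N. ?g \<tau>)"
    by (rule sum.reindex_bij_witness[where i="rev_conj N" and j="rev_conj N"])
       (auto simp: rev_conj_rev_conj rev_conj_permutes)
  also have "\<dots> = 0" by (rule rperp_orthogonal[OF f rev_words[OF w] nf])
  finally show ?thesis by simp
qed

lemma zip_words:
  "w \<in> words d N \<Longrightarrow> u \<in> words d N \<Longrightarrow> set (zip w u) \<subseteq> {..<d} \<times> {..<d} \<and> length (zip w u) = N"
  unfolding words_def by (auto dest: set_zip_leftD set_zip_rightD)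

lemma cpi_cY_in_supercomm:
  fixes f :: "(nat, 'k::field) fa"
  assumes f: "f \<in> Rperp par d N" and u: "u \<in> words d N" and nf: "of_nat (fact N) \<noteq> (0::'k)"
  shows "cpi par d N f (cY par N u) \<in> supercomm_ideal par d"
proof -
  let ?C = "\<lambda>\<sigma> w. of_int (sign \<sigma>) * psign (inv_count par N \<sigma> u) / of_nat (fact N) * f (perm_word N \<sigma> w)
                   * psign (pi_sign par N (perm_word N \<sigma> w) (perm_word N \<sigma> u)) :: 'k"
  let ?koszul = "\<lambda>\<sigma> w. psign (inv_count (gpar par) N \<sigma> (zip w u)) :: 'k"
  have "congr (supercomm_ideal par d) (cpi par d N f (cY par N u))
          (\<lambda>t. \<Sum>\<sigma>\<in>perms N. \<Sum>w\<in>words d N. ?C \<sigma> w * (?koszul \<sigma> w * mono (zip w u) t))"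
    unfolding cpi_cY_expand[OF u]
  proof (intro supercomm_sum finite_perms finite_words)
    fix \<sigma> w assume "\<sigma> \<in> perms N" "w \<in> words d N"
    then have "congr (supercomm_ideal par d) (mono (perm_word N \<sigma> (zip w u)))
                 (fa_smult (?koszul \<sigma> w) (mono (zip w u)))"
      using supercomm_reorder zip_words[OF _ u] by blast
    then show "congr (supercomm_ideal par d) (\<lambda>t. ?C \<sigma> w * mono (perm_word N \<sigma> (zip w u)) t)
                 (\<lambda>t. ?C \<sigma> w * (?koszul \<sigma> w * mono (zip w u) t))"
      using supercomm_smult[where c="?C \<sigma> w"] by (simp add: fa_smult_def)
  qed
  moreover have "(\<lambda>t. \<Sum>\<sigma>\<in>perms N. \<Sum>w\<in>words d N. ?C \<sigma> w * (?koszul \<sigma> w * mono (zip w u) t)) = (\<lambda>t. 0)"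
  proof
    fix t
    have "(\<Sum>\<sigma>\<in>perms N. \<Sum>w\<in>words d N. ?C \<sigma> w * (?koszul \<sigma> w * mono (zip w u) t)) =
          (\<Sum>w\<in>words d N. (\<Sum>\<sigma>\<in>perms N. ?C \<sigma> w * ?koszul \<sigma> w) * mono (zip w u) t)"
      by (subst sum.swap) (simp add: sum_distrib_right mult.assoc)
    also have "\<dots> = 0"
      using coefficient_vanishes[OF f u _ nf] by (simp add: mult.assoc)
    finally show "(\<Sum>\<sigma>\<in>perms N. \<Sum>w\<in>words d N. ?C \<sigma> w * (?koszul \<sigma> w * mono (zip w u) t)) = 0" .
  qed
  ultimately show ?thesis by (simp add: congr_zero_iff)
qed

lemma cpi_in_supercomm:
  fixes f :: "(nat, 'k::field) fa"
  assumes f: "f \<in> Rperp par d N" and r: "r \<in> Rsp par d N" and nf: "of_nat (fact N) \<noteq> (0::'k)"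
  shows "cpi par d N f r \<in> supercomm_ideal par d"
  using r unfolding Rsp_def supercomm_ideal_eq
proof (induction rule: lin_span.induct)
  case zero
  have "cpi par d N f (\<lambda>w. 0) = (\<lambda>w. 0)" by (rule ext) (simp add: cpi_linear)
  then show ?case by (simp add: gen_ideal.zero)
next
  case (base s)
  then show ?case using cpi_cY_in_supercomm[OF f _ nf] unfolding supercomm_ideal_eq by blast
next
  case (add x y)
  have "cpi par d N f (\<lambda>w. x w + y w) = (\<lambda>t. cpi par d N f x t + cpi par d N f y t)"
    by (rule ext) (simp add: cpi_linear distrib_right sum.distrib)
  then show ?case using add.IH by (simp add: gen_ideal.add)
next
  case (smult x c)
  have "cpi par d N f (\<lambda>w. c * x w) = fa_smult c (cpi par d N f x)"
    by (rule ext) (simp add: cpi_linear fa_smult_def sum_distrib_left mult.assoc)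
  then show ?case using smult.IH by (simp add: gen_ideal.smult)
qed

theorem end_ideal_subset_supercomm:
  assumes "of_nat (fact N) \<noteq> (0::'k::field)"
  shows "(end_ideal par d N :: (nat \<times> nat, 'k) fa set) \<subseteq> supercomm_ideal par d"
  unfolding end_ideal_def supercomm_ideal_eq
  using cpi_in_supercomm[OF _ _ assms] by (intro gen_ideal_mono) (auto simp: supercomm_ideal_eq)

section \<open>The identity is a homomorphism of superbialgebras\<close>

lemma finite_supp_Delta:
  fixes a :: "(nat \<times> nat, 'k::comm_ring_1) fa"
  assumes "a \<in> Zalg d"
  shows "finite (supp (Delta par d a))"
proof -
  let ?S = "\<Union>w\<in>supp a. (\<lambda>ks. (zip (map fst w) ks, zip ks (map snd w))) ` words d (length w)"
  have "supp (Delta par d a) \<subseteq> ?S"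
  proof
    fix p assume "p \<in> supp (Delta par d a)"
    then obtain w where w: "w \<in> supp a" "a w * delta_mono par d w p \<noteq> 0"
      unfolding supp_def Delta_def by (auto elim: sum.not_neutral_contains_not_neutral)
    then have "delta_mono par d w p \<noteq> (0::'k)" by auto
    then obtain ks where "ks \<in> words d (length w)"
        "(if p = (zip (map fst w) ks, zip ks (map snd w)) then psign (delta_sign par w ks) else 0) \<noteq> (0::'k)"
      unfolding delta_mono_def by (auto elim: sum.not_neutral_contains_not_neutral)
    then show "p \<in> ?S" using w(1) by (auto split: if_splits)
  qed
  moreover have "finite (supp a)" using assms unfolding Zalg_def fin_def supp_def by simp
  then have "finite ?S" by (intro finite_UN_I finite_imageI finite_words)
  ultimately show ?thesis by (rule finite_subset)
qed

lemma tens_map_id: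
  fixes T :: "'g list \<times> 'g list \<Rightarrow> 'k::comm_ring_1"
  assumes fin: "finite (supp T)"
  shows "tens_map (\<lambda>x. x) T = T"
proof
  fix q :: "'g list \<times> 'g list"
  obtain w1 w2 where q: "q = (w1, w2)" by (cases q)
  have "tens_map (\<lambda>x. x) T (w1, w2) = (\<Sum>p\<in>supp T. if p = (w1, w2) then T p else 0)"
    unfolding tens_map_def by (auto simp: mono_def intro!: sum.cong)
  also have "\<dots> = T (w1, w2)"
    using fin by (simp add: sum.delta') (simp add: supp_def)
  finally show "tens_map (\<lambda>x. x) T q = T q" using q by simp
qed

lemma identity_superbialg_hom:
  assumes sub: "(end_ideal par d N :: (nat \<times> nat,'k::field) fa set) \<subseteq> supercomm_ideal par d"
  shows "is_superbialg_hom par d N (\<lambda>x :: (nat \<times> nat,'k) fa. x)"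
  unfolding is_superbialg_hom_def Let_def
proof (intro conjI ballI allI impI)
  fix a b :: "(nat \<times> nat,'k) fa"
  assume "congr (end_ideal par d N) a b"
  then show "congr (supercomm_ideal par d) a b" using sub unfolding congr_def by blast
next
  fix a :: "(nat \<times> nat,'k) fa" and p assume "a \<in> Zalg d" "homog par p a"
  then show "\<exists>b\<in>Zalg d. homog par p b \<and> congr (supercomm_ideal par d) a b" using supercomm_refl by blast
next
  fix a :: "(nat \<times> nat,'k) fa" assume "a \<in> Zalg d"
  then have "tens_map (\<lambda>x. x) (Delta par d a) = Delta par d a"
    by (intro tens_map_id finite_supp_Delta)
  then show "congr (tens_ideal (supercomm_ideal par d)) (Delta par d a) (tens_map (\<lambda>x. x) (Delta par d a))"
    unfolding congr_def tens_ideal_def by (simp add: lin_span.zero)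
qed (simp_all add: supercomm_refl)

theorem mainTheorem17:
  fixes par :: "nat \<Rightarrow> bool" and d N :: nat
  assumes "CHAR('k::field) = 0 \<or> CHAR('k) > N"
  shows "\<exists>\<phi> :: (nat \<times> nat,'k) fa \<Rightarrow> (nat \<times> nat,'k) fa.
           is_superbialg_hom par d N \<phi> \<and>
           (\<forall>i<d. \<forall>j<d. congr (supercomm_ideal par d) (\<phi> (gen (i,j))) (gen (i,j))) \<and>
           (\<forall>j<d. \<forall>i. congr (supercomm_ideal par d) (\<phi> (coact d j i))
                        (if i < d then gen (i,j) else (\<lambda>w. 0)))"
proof (intro exI[of _ "\<lambda>x. x"] conjI)
  show "is_superbialg_hom par d N (\<lambda>x :: (nat \<times> nat,'k) fa. x)"
    using identity_superbialg_hom end_ideal_subset_supercomm fact_nonzero[OF assms] by blast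
qed (simp_all add: supercomm_refl coact_def)

end
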